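(* Let $s\in(0,\frac12)$ and suppose the jump kernels $j_1^{(n)}$ satisfy both the upper and lower bound with this $s$. Then the sequence $(\mathcal{E}_1^{(n)},\ell(V_1^{(n)}))$ is asymptotically compact in the generalized sense: every sequence $u_n:V_1^{(n)}\to\mathbb{R}$ with $\liminf_{n\to\infty}\big(\mathcal{E}_1^{(n)}(u_n)+\sum_{x\in V_1^{(n)}}|u_n(x)|^2\mu_1^{(n)}(x)\big)<\infty$ has a subsequence $u_{n_k}$ such that $\operatorname{Ext}_1^{(n_k)}u_{n_k}$ converges strongly in $L^2([0,1],dx)$.
   Context: Index graph: vertices $\mathbb{N}$; vertex $i$ has edges $e_{i,2i-2}$ to $2i-2$ (only if $i\ge2$), $e_{i,2i-1},e'_{i,2i-1}$ to $2i-1$, $e_{i,2i}$ to $2i$, weights $r_e>0$ with $r_{e_{i,2i-1}}=r_{e'_{i,2i-1}}$. For $e$ from $i$ to $j$, $\phi_e(x)=\frac{j}{2i}x+s_e$, $s_e=0$ for $e\in\{e_{i,2i-1},e_{i,2i}\}$, $s_e=\frac1{2i}$ for $e\in\{e_{i,2i-2},e'_{i,2i-1}\}$. $E_1^{(n)}$: paths $\sigma=e_1\cdots e_n$ of length $n$ from vertex $1$; $\phi_\sigma=\phi_{e_1}\circ\cdots\circ\phi_{e_n}$, $\delta_\sigma=r_{e_1}\cdots r_{e_n}$. $V_1^{(n)}=\{k/2^n\}_{k=0}^{2^n}$; wires $\{\phi_\sigma(0),\phi_\sigma(1)\}$, $\sigma\in E_1^{(n)}$, are all pairs of distinct points of $V_1^{(n)}$,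 each with a unique path $\sigma^{(n)}_{x,y}$. $U_1^{(n)}(x)=[x-2^{-n-1},x+2^{-n-1})\cap[0,1]$, $\mu_1^{(n)}(x)=|U_1^{(n)}(x)|$. Kernel $j_1^{(n)}(x,y)=(\delta_{\sigma^{(n)}_{x,y}}\mu_1^{(n)}(x)\mu_1^{(n)}(y))^{-1}$ for $x\ne y$, $0$ for $x=y$. $\mathcal{E}_1^{(n)}(u)=\sum_{x,y\in V_1^{(n)}}(u(x)-u(y))^2j_1^{(n)}(x,y)\mu_1^{(n)}(x)\mu_1^{(n)}(y)$. Kernel bounds: there are $0<\lambda_1\le\Lambda_1$ with $\lambda_1|x-y|^{-1-2s}\le j_1^{(n)}(x,y)\le\Lambda_1|x-y|^{-1-2s}$ for all $n\ge0$ and distinct $x,y\in V_1^{(n)}$. $\operatorname{Ext}_1^{(n)}u(x)=u(\bar x)$ where $\bar x\in V_1^{(n)}$ satisfies $x\in U_1^{(n)}(\bar x)$. *)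

theory Defs
  imports "HOL-Analysis.Analysis"
begin

text \<open>Edge labels of the index graph at vertex i:
  EL = e_{i,2i-2} (only for i \<ge> 2), EM = e_{i,2i-1}, EM' = e'_{i,2i-1}, ER = e_{i,2i}.\<close>
datatype lbl = EL | EM | EMp | ER

fun tgt :: "nat \<Rightarrow> lbl \<Rightarrow> nat" where
  "tgt i EL = 2*i - 2"
| "tgt i EM = 2*i - 1"
| "tgt i EMp = 2*i - 1"
| "tgt i ER = 2*i"

definition edge_ok :: "nat \<Rightarrow> lbl \<Rightarrow> bool" where
  "edge_ok i e \<longleftrightarrow> (e = EL \<longrightarrow> i \<ge> 2)"

fun shift :: "nat \<Rightarrow> lbl \<Rightarrow> real" where
  "shift i EL = 1 / (2 * real i)"
| "shift i EM = 0"
| "shift i EMp = 1 / (2 * real i)"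
| "shift i ER = 0"

definition phi_e :: "nat \<Rightarrow> lbl \<Rightarrow> real \<Rightarrow> real" where
  "phi_e i e x = real (tgt i e) / (2 * real i) * x + shift i e"

fun vpath :: "nat \<Rightarrow> lbl list \<Rightarrow> bool" where
  "vpath i [] = True"
| "vpath i (e # es) = (edge_ok i e \<and> vpath (tgt i e) es)"

fun phiP :: "nat \<Rightarrow> lbl list \<Rightarrow> real \<Rightarrow> real" where
  "phiP i [] = id"
| "phiP i (e # es) = phi_e i e \<circ> phiP (tgt i e) es"

fun deltaP :: "(nat \<Rightarrow> lbl \<Rightarrow> real) \<Rightarrow> nat \<Rightarrow> lbl list \<Rightarrow> real" where
  "deltaP r i [] = 1"
| "deltaP r i (e # es) = r i e * deltaP r (tgt i e) es"

definition paths1 :: "nat \<Rightarrow> lbl list set" where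
  "paths1 n = {\<sigma>. length \<sigma> = n \<and> vpath 1 \<sigma>}"

definition V1 :: "nat \<Rightarrow> real set" where
  "V1 n = {real k / 2 ^ n | k. k \<le> 2 ^ n}"

definition sigma_xy :: "nat \<Rightarrow> real \<Rightarrow> real \<Rightarrow> lbl list" where
  "sigma_xy n x y = (THE \<sigma>. \<sigma> \<in> paths1 n \<and> {phiP 1 \<sigma> 0, phiP 1 \<sigma> 1} = {x, y})"

definition U1 :: "nat \<Rightarrow> real \<Rightarrow> real set" where
  "U1 n x = {x - 1 / 2 ^ (n+1) ..< x + 1 / 2 ^ (n+1)} \<inter> {0..1}"

definition mu1 :: "nat \<Rightarrow> real \<Rightarrow> real" where
  "mu1 n x = measure lborel (U1 n x)"

definition j1 :: "(nat \<Rightarrow> lbl \<Rightarrow> real) \<Rightarrow> nat \<Rightarrow> real \<Rightarrow> real \<Rightarrow> real" where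
  "j1 r n x y = (if x = y then 0
      else 1 / (deltaP r 1 (sigma_xy n x y) * mu1 n x * mu1 n y))"

definition E1 :: "(nat \<Rightarrow> lbl \<Rightarrow> real) \<Rightarrow> nat \<Rightarrow> (real \<Rightarrow> real) \<Rightarrow> real" where
  "E1 r n u = (\<Sum>x\<in>V1 n. \<Sum>y\<in>V1 n. (u x - u y)^2 * j1 r n x y * mu1 n x * mu1 n y)"

definition Ext1 :: "nat \<Rightarrow> (real \<Rightarrow> real) \<Rightarrow> real \<Rightarrow> real" where
  "Ext1 n u x = u (THE y. y \<in> V1 n \<and> x \<in> U1 n y)"

definition weights_ok :: "(nat \<Rightarrow> lbl \<Rightarrow> real) \<Rightarrow> bool" where
  "weights_ok r \<longleftrightarrow> (\<forall>i\<ge>1. (\<forall>e. edge_ok i e \<longrightarrow> r i e > 0) \<and> r i EM = r i EMp)"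

end

theory Submission
  imports Defs
begin

text \<open>
  A grid function w at level n is identified with the step function Ext1 n w. For m \<le> n,
  averaging u over the cells of level m produces a level-m function whose step function is
  L2-close to that of u: two points of level n whose cells meet a common cell of level m
  are at distance at most 2/2^m, where the lower kernel bound makes j1 at least
  lam1 (2/2^m)^-(1+2s), so the squared L2 error is at most C(m) E(u) with C(m) of order
  2^(-2sm). The coarse averages are bounded by the L2 bound and live in a finite-dimensional
  space, so a pigeonhole argument yields, for every \<epsilon> > 0, an infinite subfamily
  that is pairwise \<epsilon>-close in L2. A diagonal argument gives a rapidly Cauchy
  subsequence, and such a sequence converges in L2 (almost everywhere convergence plus
  Fatou).
\<close>

section \<open>Grid cells\<close>

lemma V1_eq_image: "V1 n = (\<lambda>k. real k / 2^n) ` {..2^n}"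
  unfolding V1_def by auto

lemma finite_V1 [simp]: "finite (V1 n)"
  unfolding V1_eq_image by simp

lemma V1_subset_unit: "V1 n \<subseteq> {0..1}"
  unfolding V1_def by (auto simp: divide_le_eq_1)

lemma mem_U1_iff:
  "t \<in> U1 n x \<longleftrightarrow> x - 1/2^(n+1) \<le> t \<and> t < x + 1/2^(n+1) \<and> 0 \<le> t \<and> t \<le> 1"
  unfolding U1_def by auto

lemma U1_subset_unit: "U1 n x \<subseteq> {0..1}"
  unfolding U1_def by auto

lemma sets_U1 [measurable]: "U1 n x \<in> sets borel"
  unfolding U1_def by simp

lemma U1_cover:
  assumes "t \<in> {0..1}"
  shows "\<exists>x\<in>V1 n. t \<in> U1 n x"
proof -
  define k where "k = nat \<lfloor>t * 2^n + 1/2\<rfloor>"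
  have k: "real k = of_int \<lfloor>t * 2^n + 1/2\<rfloor>"
    using assms unfolding k_def by simp
  have round: "real k \<le> t * 2^n + 1/2" "t * 2^n + 1/2 < real k + 1"
    unfolding k by linarith+
  have "t * 2^n \<le> 2^n"
    using assms by simp
  then have "real k < 2^n + 1"
    using round by linarith
  then have "real k < real (2^n + 1)"
    by simp
  then have "k \<le> 2^n"
    unfolding of_nat_less_iff by simp
  moreover have "real k / 2^n - 1/2^(n+1) \<le> t" "t < real k / 2^n + 1/2^(n+1)"
    using round by (simp_all add: field_simps)
  ultimately show ?thesis
    using assms unfolding V1_def mem_U1_iff by auto
qed

lemma U1_disjoint:
  assumes "x \<in> V1 n" "x' \<in> V1 n" "t \<in> U1 n x" "t \<in> U1 n x'"
  shows "x = x'"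
proof -
  obtain k k' :: nat where kk: "x = real k / 2^n" "x' = real k' / 2^n"
    using assms(1,2) unfolding V1_def by auto
  have "\<bar>x - x'\<bar> < 2 / 2^(n+1)"
    using assms(3,4) unfolding mem_U1_iff by auto
  then have "\<bar>real k - real k'\<bar> < 1"
    unfolding kk by (simp add: divide_less_cancel flip: diff_divide_distrib)
  then show ?thesis
    using kk by simp
qed

lemma disjoint_family_on_U1: "disjoint_family_on (U1 n) (V1 n)"
  unfolding disjoint_family_on_def using U1_disjoint by blast

lemma UN_U1_eq_unit: "(\<Union>x\<in>V1 n. U1 n x) = {0..1}"
  using U1_cover U1_subset_unit by blast

text \<open>Outside [0,1] the defining predicate is empty, so the value there is unspecified.\<close>

definition cell_center :: "nat \<Rightarrow> real \<Rightarrow> real" where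
  "cell_center n t = (THE x. x \<in> V1 n \<and> t \<in> U1 n x)"

lemma Ext1_eq_cell_center: "Ext1 n w t = w (cell_center n t)"
  unfolding Ext1_def cell_center_def ..

lemma cell_center:
  assumes "t \<in> {0..1}"
  shows "cell_center n t \<in> V1 n" "t \<in> U1 n (cell_center n t)"
proof -
  have "\<exists>!x. x \<in> V1 n \<and> t \<in> U1 n x"
    using U1_cover[OF assms] U1_disjoint by blast
  then have "cell_center n t \<in> V1 n \<and> t \<in> U1 n (cell_center n t)"
    unfolding cell_center_def by (rule theI')
  then show "cell_center n t \<in> V1 n" "t \<in> U1 n (cell_center n t)"
    by auto
qed

lemma indicator_U1:
  assumes "x \<in> V1 n"
  shows "indicator (U1 n x) t = (if t \<in> {0..1} \<and> x = cell_center n t then 1 else 0)"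
  using cell_center[of t n] U1_disjoint[OF assms, of "cell_center n t" t] U1_subset_unit[of n x]
  by (auto simp: indicator_def)

lemma indicator_U1_outside: "t \<notin> {0..1} \<Longrightarrow> indicator (U1 n x) t = 0"
  using U1_subset_unit[of n x] by (auto simp: indicator_def)

section \<open>Step functions and cell overlaps\<close>

definition step_fun :: "nat \<Rightarrow> (real \<Rightarrow> real) \<Rightarrow> real \<Rightarrow> real" where
  "step_fun n w t = (\<Sum>x\<in>V1 n. w x * indicator (U1 n x) t)"

lemma step_fun_eq_Ext1: "step_fun n w t = indicator {0..1} t * Ext1 n w t"
proof (cases "t \<in> {0..1}")
  case True
  then have "step_fun n w t = (\<Sum>x\<in>V1 n. if x = cell_center n t then w x else 0)"
    unfolding step_fun_def by (intro sum.cong) (auto simp: indicator_U1)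
  then show ?thesis
    using True cell_center(1)[OF True] by (simp add: Ext1_eq_cell_center)
next
  case False
  then show ?thesis
    unfolding step_fun_def by (simp add: indicator_U1_outside)
qed

lemma borel_measurable_step_fun [measurable]: "step_fun n w \<in> borel_measurable lborel"
  unfolding step_fun_def by measurable

lemma step_fun_diff: "step_fun n v t - step_fun n w t = step_fun n (\<lambda>x. v x - w x) t"
  unfolding step_fun_def by (simp add: sum_subtractf left_diff_distrib)

lemma mu1_nonneg: "0 \<le> mu1 n x"
  unfolding mu1_def by simp

lemma sum_sq_mu1_nonneg: "0 \<le> (\<Sum>x\<in>V1 n. (w x)^2 * mu1 n x)"
  by (intro sum_nonneg mult_nonneg_nonneg mu1_nonneg zero_le_power2)

lemma emeasure_subset_unit_finite:
  assumes "A \<subseteq> {0..1::real}"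
  shows "emeasure lborel A \<noteq> \<infinity>"
proof -
  have "emeasure lborel A \<le> emeasure lborel {0..1::real}"
    using assms by (intro emeasure_mono) simp_all
  then show ?thesis
    by (auto simp: top_unique)
qed

lemma emeasure_U1_finite: "emeasure lborel (U1 n x) \<noteq> \<infinity>"
  by (rule emeasure_subset_unit_finite[OF U1_subset_unit])

lemma emeasure_U1_Int_finite: "emeasure lborel (U1 n x \<inter> A) \<noteq> \<infinity>"
  by (rule emeasure_subset_unit_finite) (use U1_subset_unit in blast)

lemma sum_mu1: "(\<Sum>x\<in>V1 n. mu1 n x) = 1"
proof -
  have "(\<Sum>x\<in>V1 n. mu1 n x) = measure lborel (\<Union>x\<in>V1 n. U1 n x)"
    unfolding mu1_def
    by (intro measure_finite_Union[symmetric] disjoint_family_on_U1 emeasure_U1_finite) auto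
  then show ?thesis
    by (simp add: UN_U1_eq_unit)
qed

lemma mu1_ge:
  assumes "x \<in> V1 n"
  shows "1 / 2^(n+1) \<le> mu1 n x"
proof -
  define h :: real where "h = 1 / 2^(n+1)"
  have h: "0 < h" "h \<le> 1/2"
    unfolding h_def by (auto simp: field_simps)
  have "x \<in> {0..1}"
    using assms V1_subset_unit by blast
  then have x: "0 \<le> x" "x \<le> 1"
    by auto
  have U: "U1 n x = {x - h..<x + h} \<inter> {0..1}"
    unfolding U1_def h_def by simp
  obtain a where a: "{a..<a + h} \<subseteq> U1 n x"
  proof (cases "x + h \<le> 1")
    case True
    then have "{x..<x + h} \<subseteq> U1 n x"
      using x h unfolding U by auto
    then show ?thesis using that by blast
  next
    case False
    then have "{x - h..<x - h + h} \<subseteq> U1 n x"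
      using x h unfolding U by auto
    then show ?thesis using that by blast
  qed
  have "h = measure lborel {a..<a + h}"
    using h by simp
  also have "\<dots> \<le> mu1 n x"
    unfolding mu1_def using a emeasure_U1_finite
    by (intro measure_mono_fmeasurable) (auto simp: fmeasurable_def less_top)
  finally show ?thesis
    unfolding h_def .
qed

lemma mu1_pos:
  assumes "x \<in> V1 n"
  shows "0 < mu1 n x"
  using mu1_ge[OF assms] by (rule less_le_trans[rotated]) simp

definition overlap :: "nat \<Rightarrow> nat \<Rightarrow> real \<Rightarrow> real \<Rightarrow> real" where
  "overlap n m x y = measure lborel (U1 n x \<inter> U1 m y)"

lemma overlap_nonneg: "0 \<le> overlap n m x y"
  unfolding overlap_def by simp

lemma overlap_commute: "overlap n m x y = overlap m n y x"
  unfolding overlap_def by (simp add: Int_commute)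

lemma sum_overlap_right: "(\<Sum>y\<in>V1 m. overlap n m x y) = mu1 n x"
proof -
  have "(\<Sum>y\<in>V1 m. overlap n m x y) = measure lborel (\<Union>y\<in>V1 m. U1 n x \<inter> U1 m y)"
    unfolding overlap_def using disjoint_family_on_U1[of m]
    by (intro measure_finite_Union[symmetric] emeasure_U1_Int_finite)
       (auto simp: disjoint_family_on_def)
  also have "(\<Union>y\<in>V1 m. U1 n x \<inter> U1 m y) = U1 n x"
    using UN_U1_eq_unit[of m] U1_subset_unit[of n x] by blast
  finally show ?thesis
    unfolding mu1_def .
qed

lemma sum_overlap_left: "(\<Sum>x\<in>V1 n. overlap n m x y) = mu1 m y"
  by (simp add: overlap_commute sum_overlap_right)

lemma overlap_le_mu1: "overlap n m x y \<le> mu1 n x"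
  unfolding overlap_def mu1_def using emeasure_U1_finite
  by (intro measure_mono_fmeasurable) (auto simp: fmeasurable_def less_top)

lemma overlap_pos_imp_close:
  assumes "0 < overlap n m x y"
  shows "\<bar>x - y\<bar> \<le> 1/2^(n+1) + 1/2^(m+1)"
proof -
  obtain t where "t \<in> U1 n x" "t \<in> U1 m y"
    using assms unfolding overlap_def by (metis disjoint_iff measure_empty order.irrefl)
  then show ?thesis
    unfolding mem_U1_iff by auto
qed

lemma nn_integral_sum_indicator:
  fixes M :: "'a measure" and c :: "'i \<Rightarrow> real"
  assumes "finite I" "\<And>i. i \<in> I \<Longrightarrow> 0 \<le> c i"
    and "\<And>i. i \<in> I \<Longrightarrow> A i \<in> sets M" "\<And>i. i \<in> I \<Longrightarrow> emeasure M (A i) \<noteq> \<infinity>"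
  shows "(\<integral>\<^sup>+t. ennreal (\<Sum>i\<in>I. c i * indicator (A i) t) \<partial>M)
    = ennreal (\<Sum>i\<in>I. c i * measure M (A i))"
proof -
  have "(\<integral>\<^sup>+t. ennreal (\<Sum>i\<in>I. c i * indicator (A i) t) \<partial>M)
      = (\<integral>\<^sup>+t. (\<Sum>i\<in>I. ennreal (c i) * indicator (A i) t) \<partial>M)"
    using assms(2)
    by (intro nn_integral_cong) (simp add: ennreal_mult' ennreal_indicator flip: sum_ennreal)
  also have "\<dots> = (\<Sum>i\<in>I. ennreal (c i) * emeasure M (A i))"
    using assms(3) by (simp add: nn_integral_sum nn_integral_cmult_indicator)
  also have "\<dots> = ennreal (\<Sum>i\<in>I. c i * measure M (A i))"
    using assms(2,4) by (simp add: emeasure_eq_ennreal_measure ennreal_mult flip: sum_ennreal)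
  finally show ?thesis .
qed

lemma step_fun_diff_sq:
  "(step_fun n u t - step_fun m v t)^2
    = (\<Sum>x\<in>V1 n. \<Sum>y\<in>V1 m. (u x - v y)^2 * indicator (U1 n x \<inter> U1 m y) t)"
proof (cases "t \<in> {0..1}")
  case True
  have "(\<Sum>x\<in>V1 n. \<Sum>y\<in>V1 m. (u x - v y)^2 * indicator (U1 n x \<inter> U1 m y) t)
      = (\<Sum>x\<in>V1 n. \<Sum>y\<in>V1 m.
           if y = cell_center m t then if x = cell_center n t then (u x - v y)^2 else 0 else 0)"
    using True by (intro sum.cong refl) (simp add: indicator_inter_arith indicator_U1)
  also have "\<dots> = (u (cell_center n t) - v (cell_center m t))^2"
    using cell_center(1)[OF True] by simp
  finally show ?thesis
    using True by (simp add: step_fun_eq_Ext1 Ext1_eq_cell_center)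
next
  case False
  then show ?thesis
    by (simp add: step_fun_eq_Ext1 indicator_inter_arith indicator_U1_outside)
qed

lemma nn_integral_step_fun_diff_sq:
  "(\<integral>\<^sup>+t. ennreal ((step_fun n u t - step_fun m v t)^2) \<partial>lborel)
    = ennreal (\<Sum>x\<in>V1 n. \<Sum>y\<in>V1 m. (u x - v y)^2 * overlap n m x y)"
  unfolding step_fun_diff_sq overlap_def sum.cartesian_product split_def
  using emeasure_U1_Int_finite by (intro nn_integral_sum_indicator) auto

lemma nn_integral_step_fun_sq:
  "(\<integral>\<^sup>+t. ennreal ((step_fun n w t)^2) \<partial>lborel) = ennreal (\<Sum>x\<in>V1 n. (w x)^2 * mu1 n x)"
  using nn_integral_step_fun_diff_sq[of n w n "\<lambda>_. 0"]
  by (simp add: step_fun_def sum_overlap_right flip: sum_distrib_left)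

section \<open>Coarse graining\<close>

lemma weighted_mean_sq_le:
  fixes a b :: "'i \<Rightarrow> real"
  assumes "finite A" "\<And>i. i \<in> A \<Longrightarrow> 0 \<le> a i" "0 < (\<Sum>i\<in>A. a i)"
  shows "((\<Sum>i\<in>A. a i * b i) / (\<Sum>i\<in>A. a i))^2 \<le> (\<Sum>i\<in>A. a i * (b i)^2) / (\<Sum>i\<in>A. a i)"
proof -
  define W where "W = (\<Sum>i\<in>A. a i)"
  have "A \<noteq> {}"
    using assms(3) by auto
  then have "(\<Sum>i\<in>A. (a i / W) *\<^sub>R b i)^2 \<le> (\<Sum>i\<in>A. a i / W * (b i)^2)"
    using assms convex_power2 unfolding W_def
    by (intro convex_on_sum) (auto simp flip: sum_divide_distrib)
  then show ?thesis
    unfolding W_def[symmetric] by (simp add: sum_divide_distrib)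
qed

definition cell_avg :: "nat \<Rightarrow> nat \<Rightarrow> (real \<Rightarrow> real) \<Rightarrow> real \<Rightarrow> real" where
  "cell_avg n m u y = (\<Sum>x\<in>V1 n. overlap n m x y * u x) / mu1 m y"

lemma cell_avg_deviation_sq:
  assumes "y \<in> V1 m"
  shows "(u x - cell_avg n m u y)^2 \<le> (\<Sum>x'\<in>V1 n. overlap n m x' y * (u x - u x')^2) / mu1 m y"
proof -
  have mu: "(\<Sum>x'\<in>V1 n. overlap n m x' y) = mu1 m y" "0 < mu1 m y"
    using sum_overlap_left mu1_pos[OF assms] by auto
  have "u x - cell_avg n m u y = (\<Sum>x'\<in>V1 n. overlap n m x' y * (u x - u x')) / mu1 m y"
    using mu unfolding cell_avg_def
    by (simp add: field_simps sum_subtractf flip: sum_distrib_left sum_distrib_right)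
  then show ?thesis
    using weighted_mean_sq_le[of "V1 n" "\<lambda>x'. overlap n m x' y" "\<lambda>x'. u x - u x'"] mu
    by (simp add: overlap_nonneg)
qed

lemma cell_avg_sq_le:
  assumes "y \<in> V1 m"
  shows "(cell_avg n m u y)^2 \<le> 2^(m+1) * (\<Sum>x\<in>V1 n. (u x)^2 * mu1 n x)"
proof -
  have mu: "(\<Sum>x\<in>V1 n. overlap n m x y) = mu1 m y" "0 < mu1 m y"
    using sum_overlap_left mu1_pos[OF assms] by auto
  have "(cell_avg n m u y)^2 \<le> (\<Sum>x\<in>V1 n. overlap n m x y * (u x)^2) * (1 / mu1 m y)"
    using weighted_mean_sq_le[of "V1 n" "\<lambda>x. overlap n m x y" u] mu
    by (simp add: overlap_nonneg cell_avg_def)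
  also have "\<dots> \<le> (\<Sum>x\<in>V1 n. (u x)^2 * mu1 n x) * 2^(m+1)"
  proof (rule mult_mono)
    show "(\<Sum>x\<in>V1 n. overlap n m x y * (u x)^2) \<le> (\<Sum>x\<in>V1 n. (u x)^2 * mu1 n x)"
      by (intro sum_mono) (metis mult.commute mult_right_mono overlap_le_mu1 zero_le_power2)
    show "1 / mu1 m y \<le> 2^(m+1)"
      using mu1_ge[OF assms] mu by (simp add: field_simps)
  qed (auto intro!: sum_nonneg mult_nonneg_nonneg mu1_nonneg)
  finally show ?thesis
    by (simp add: mult.commute)
qed

lemma overlapping_cells_dist_le:
  assumes "m \<le> n" "0 < overlap n m x y" "0 < overlap n m x' y"
  shows "\<bar>x - x'\<bar> \<le> 2 / 2^m"
proof -
  have "(1::real) / 2^(n+1) \<le> 1 / 2^(m+1)"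
    using assms(1) by (intro divide_left_mono power_increasing) auto
  moreover have "4 * (1 / 2^(m+1)) = (2::real) / 2^m"
    by simp
  ultimately show ?thesis
    using overlap_pos_imp_close[OF assms(2)] overlap_pos_imp_close[OF assms(3)] by linarith
qed

lemma one_le_rescaled_kernel:
  fixes d h j lam \<alpha> :: real
  assumes "0 < lam" "0 \<le> \<alpha>" "0 < d" "d \<le> h" "lam * d powr (-\<alpha>) \<le> j"
  shows "1 \<le> h powr \<alpha> / lam * j"
proof -
  have "h powr (-\<alpha>) \<le> d powr (-\<alpha>)"
    using assms by (intro powr_mono2') auto
  then have "lam * h powr (-\<alpha>) \<le> j"
    using assms(1,5) mult_left_mono[of "h powr (-\<alpha>)" "d powr (-\<alpha>)" lam] by linarith
  moreover have "h powr \<alpha> * h powr (-\<alpha>) = 1"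
    using assms(3,4) by (simp add: powr_add[symmetric])
  ultimately show ?thesis
    using assms(1,3,4) by (simp add: field_simps powr_minus)
qed

lemma coarse_graining_term_le:
  fixes j :: "real \<Rightarrow> real \<Rightarrow> real"
  assumes "m \<le> n" "0 < lam" "0 \<le> s" "x \<in> V1 n" "x' \<in> V1 n"
    and lb: "x \<noteq> x' \<Longrightarrow> lam * \<bar>x - x'\<bar> powr (-(1 + 2 * s)) \<le> j x x'"
  shows "overlap n m x y * overlap n m x' y * (u x - u x')^2
    \<le> (2/2^m) powr (1 + 2 * s) / lam * ((u x - u x')^2 * j x x' * mu1 n x' * overlap n m x y)"
proof (cases "x \<noteq> x' \<and> 0 < overlap n m x y \<and> 0 < overlap n m x' y")
  case True
  then have one: "1 \<le> (2/2^m) powr (1 + 2 * s) / lam * j x x'"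
    using assms overlapping_cells_dist_le[OF assms(1)]
    by (intro one_le_rescaled_kernel[where d = "\<bar>x - x'\<bar>"]) auto
  have "overlap n m x y * overlap n m x' y * (u x - u x')^2
      \<le> (u x - u x')^2 * mu1 n x' * overlap n m x y"
    using mult_right_mono[OF overlap_le_mu1[of n m x' y], of "(u x - u x')^2 * overlap n m x y"]
      overlap_nonneg[of n m x y]
    by (simp add: ac_simps)
  also have "\<dots> \<le> (u x - u x')^2 * mu1 n x' * overlap n m x y * ((2/2^m) powr (1 + 2 * s) / lam * j x x')"
    using mult_left_mono[OF one, of "(u x - u x')^2 * mu1 n x' * overlap n m x y"]
    by (simp add: mu1_nonneg overlap_nonneg)
  finally show ?thesis
    by (simp add: ac_simps)
next
  case False
  have "0 \<le> j x x'" if "x \<noteq> x'"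
    by (rule order_trans[OF _ lb[OF that]]) (use assms(2) in simp)
  then have "0 \<le> (u x - u x')^2 * j x x' * mu1 n x' * overlap n m x y"
    by (cases "x = x'") (auto intro!: mult_nonneg_nonneg mu1_nonneg overlap_nonneg)
  then have "0 \<le> (2/2^m) powr (1 + 2 * s) / lam * ((u x - u x')^2 * j x x' * mu1 n x' * overlap n m x y)"
    by (rule mult_nonneg_nonneg[OF divide_nonneg_pos[OF powr_ge_zero assms(2)]])
  moreover have "overlap n m x y * overlap n m x' y * (u x - u x')^2 = 0"
    using False overlap_nonneg[of n m x y] overlap_nonneg[of n m x' y] by auto
  ultimately show ?thesis
    by linarith
qed

lemma coarse_graining_error_le:
  fixes j :: "real \<Rightarrow> real \<Rightarrow> real"
  assumes "m \<le> n" "0 < lam" "0 \<le> s"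
    and lb: "\<And>x x'. x \<in> V1 n \<Longrightarrow> x' \<in> V1 n \<Longrightarrow> x \<noteq> x' \<Longrightarrow>
      lam * \<bar>x - x'\<bar> powr (-(1 + 2 * s)) \<le> j x x'"
  shows "(\<Sum>x\<in>V1 n. \<Sum>y\<in>V1 m. (u x - cell_avg n m u y)^2 * overlap n m x y)
    \<le> 2^(m+1) * (2/2^m) powr (1 + 2 * s) / lam
      * (\<Sum>x\<in>V1 n. \<Sum>x'\<in>V1 n. (u x - u x')^2 * j x x' * mu1 n x * mu1 n x')"
proof -
  define K where "K = (2/2^m) powr (1 + 2 * s) / lam"
  define c :: real where "c = 2^(m+1)"
  define g where "g x x' = (u x - u x')^2 * j x x'" for x x'
  have "(\<Sum>x\<in>V1 n. \<Sum>y\<in>V1 m. (u x - cell_avg n m u y)^2 * overlap n m x y)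
      \<le> (\<Sum>x\<in>V1 n. \<Sum>y\<in>V1 m. \<Sum>x'\<in>V1 n.
           c * (overlap n m x y * overlap n m x' y * (u x - u x')^2))"
  proof (intro sum_mono)
    fix x y
    assume y: "y \<in> V1 m"
    have "(u x - cell_avg n m u y)^2
        \<le> (\<Sum>x'\<in>V1 n. overlap n m x' y * (u x - u x')^2) * (1 / mu1 m y)"
      using cell_avg_deviation_sq[OF y] by simp
    also have "\<dots> \<le> (\<Sum>x'\<in>V1 n. overlap n m x' y * (u x - u x')^2) * c"
      using mu1_ge[OF y] mu1_pos[OF y] unfolding c_def
      by (intro mult_left_mono sum_nonneg mult_nonneg_nonneg overlap_nonneg)
         (auto simp: field_simps)
    finally have "(u x - cell_avg n m u y)^2 * overlap n m x y
        \<le> (\<Sum>x'\<in>V1 n. overlap n m x' y * (u x - u x')^2) * c * overlap n m x y"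
      by (rule mult_right_mono) (rule overlap_nonneg)
    then show "(u x - cell_avg n m u y)^2 * overlap n m x y
        \<le> (\<Sum>x'\<in>V1 n. c * (overlap n m x y * overlap n m x' y * (u x - u x')^2))"
      by (simp add: sum_distrib_left sum_distrib_right ac_simps)
  qed
  also have "\<dots> \<le> (\<Sum>x\<in>V1 n. \<Sum>y\<in>V1 m. \<Sum>x'\<in>V1 n.
      c * (K * (g x x' * mu1 n x' * overlap n m x y)))"
    unfolding K_def g_def c_def
    using assms(1-3) lb by (intro sum_mono mult_left_mono coarse_graining_term_le) auto
  also have "\<dots> = (\<Sum>x\<in>V1 n. \<Sum>x'\<in>V1 n. c * K * g x x' * mu1 n x' * (\<Sum>y\<in>V1 m. overlap n m x y))"
    by (subst sum.swap) (simp add: sum_distrib_left ac_simps)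
  also have "\<dots> = c * K * (\<Sum>x\<in>V1 n. \<Sum>x'\<in>V1 n. g x x' * mu1 n x * mu1 n x')"
    by (simp add: sum_overlap_right sum_distrib_left ac_simps)
  finally show ?thesis
    unfolding c_def K_def g_def by (simp add: ac_simps)
qed

lemma coarse_graining_constant_tendsto_zero:
  fixes s lam :: real
  assumes "0 < s"
  shows "(\<lambda>m. 2^(m+1) * (2/2^m) powr (1 + 2 * s) / lam) \<longlonglongrightarrow> 0"
proof -
  have "2^(m+1) * (2/2^m) powr (1 + 2 * s) / lam = (2 * 2 powr (1 + 2 * s) / lam) / (2 powr (2 * s))^m"
    for m :: nat
  proof -
    have "((2::real)^m) powr (2 * s) = (2 powr (2 * s))^m"
      by (simp add: powr_power powr_realpow[symmetric] powr_powr mult.commute)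
    then have "((2::real)^m) powr (1 + 2 * s) = 2^m * (2 powr (2 * s))^m"
      by (simp add: powr_add)
    then show ?thesis
      by (simp add: powr_divide)
  qed
  moreover have "(\<lambda>m. (2 * 2 powr (1 + 2 * s) / lam) / (2 powr (2 * s))^m) \<longlonglongrightarrow> 0"
    using assms by (intro LIMSEQ_divide_realpow_zero) simp
  ultimately show ?thesis
    by simp
qed

section \<open>Diagonal extraction and completeness of L2\<close>

lemma diagonal_subseq:
  fixes P :: "nat \<Rightarrow> nat \<Rightarrow> nat \<Rightarrow> bool"
  assumes thin: "\<And>i K. infinite K \<Longrightarrow> \<exists>K'\<subseteq>K. infinite K' \<and> (\<forall>a\<in>K'. \<forall>b\<in>K'. P i a b)"
  shows "\<exists>r. strict_mono r \<and> (\<forall>i j. i \<le> j \<longrightarrow> P i (r i) (r j))"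
proof -
  define good where "good i p \<longleftrightarrow> infinite (fst p) \<and> snd p \<in> fst p \<and>
      (\<forall>a\<in>fst p. \<forall>b\<in>fst p. P i a b)" for i and p :: "nat set \<times> nat"
  have refine: "\<exists>p. good i p \<and> fst p \<subseteq> K \<and> k < snd p" if K: "infinite K" for i K k
  proof -
    obtain K' where K': "K' \<subseteq> K" "infinite K'" "\<forall>a\<in>K'. \<forall>b\<in>K'. P i a b"
      using thin[OF K] by blast
    then obtain k' where "k' \<in> K'" "k < k'"
      by (metis infinite_nat_iff_unbounded)
    then show ?thesis
      using K' unfolding good_def by (intro exI[of _ "(K', k')"]) auto
  qed
  have step: "\<exists>p'. good i p' \<and> fst p' \<subseteq> fst p \<and> snd p < snd p'" if "good j p" for i j p
    using that refine[of "fst p" i "snd p"] unfolding good_def by blast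
  obtain p where p: "\<And>i. good i (p i)" "\<And>i. fst (p (Suc i)) \<subseteq> fst (p i)"
    "\<And>i. snd (p i) < snd (p (Suc i))"
  proof -
    have "\<exists>p. \<forall>i. good i (p i) \<and> fst (p (Suc i)) \<subseteq> fst (p i) \<and> snd (p i) < snd (p (Suc i))"
    proof (rule dependent_nat_choice)
      show "\<exists>p. good 0 p"
        using refine[of UNIV 0 0] by auto
    next
      fix p i
      assume "good i p"
      then show "\<exists>p'. good (Suc i) p' \<and> fst p' \<subseteq> fst p \<and> snd p < snd p'"
        by (rule step)
    qed
    then show ?thesis
      using that by blast
  qed
  have "decseq (\<lambda>i. fst (p i))"
    using p(2) by (intro decseq_SucI)
  then have "snd (p j) \<in> fst (p i)" if "i \<le> j" for i j
    using p(1)[of j] decseqD[OF _ that] unfolding good_def by blast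
  then show ?thesis
    using p(1,3) unfolding good_def by (intro exI[of _ "\<lambda>i. snd (p i)"]) (auto intro: strict_monoI_Suc)
qed

lemma abs_le_mult_sq_plus_inverse:
  fixes p d :: real
  assumes "0 < p"
  shows "\<bar>d\<bar> \<le> p * d^2 + 1 / p"
proof -
  have "0 \<le> (p * \<bar>d\<bar> - 1)^2 / p"
    using assms by simp
  also have "(p * \<bar>d\<bar> - 1)^2 / p = p * d^2 + 1 / p - 2 * \<bar>d\<bar>"
    using assms by (simp add: power2_eq_square field_simps)
  finally show ?thesis
    by simp
qed

lemma nn_integral_sq_diff_le:
  fixes f g h :: "'a \<Rightarrow> real"
  assumes [measurable]: "f \<in> borel_measurable M" "g \<in> borel_measurable M" "h \<in> borel_measurable M"
    and "(\<integral>\<^sup>+t. ennreal ((f t - h t)^2) \<partial>M) \<le> ennreal a"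
    and "(\<integral>\<^sup>+t. ennreal ((g t - h t)^2) \<partial>M) \<le> ennreal b"
    and "0 \<le> a" "0 \<le> b"
  shows "(\<integral>\<^sup>+t. ennreal ((f t - g t)^2) \<partial>M) \<le> ennreal (2 * a + 2 * b)"
proof -
  have "ennreal ((f t - g t)^2) \<le> 2 * ennreal ((f t - h t)^2) + 2 * ennreal ((g t - h t)^2)"
    for t
  proof -
    have "(f t - g t)^2 \<le> 2 * (f t - h t)^2 + 2 * (g t - h t)^2"
      using zero_le_power2[of "f t + g t - 2 * h t"] by (simp add: power2_eq_square algebra_simps)
    then have "ennreal ((f t - g t)^2) \<le> ennreal (2 * (f t - h t)^2 + 2 * (g t - h t)^2)"
      by (rule ennreal_leI)
    then show ?thesis
      by (simp add: ennreal_plus ennreal_mult)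
  qed
  then have "(\<integral>\<^sup>+t. ennreal ((f t - g t)^2) \<partial>M)
      \<le> (\<integral>\<^sup>+t. 2 * ennreal ((f t - h t)^2) + 2 * ennreal ((g t - h t)^2) \<partial>M)"
    by (intro nn_integral_mono)
  also have "\<dots> = 2 * (\<integral>\<^sup>+t. ennreal ((f t - h t)^2) \<partial>M)
      + 2 * (\<integral>\<^sup>+t. ennreal ((g t - h t)^2) \<partial>M)"
    by (simp add: nn_integral_add nn_integral_cmult)
  also have "\<dots> \<le> 2 * ennreal a + 2 * ennreal b"
    using assms(4,5) by (intro add_mono mult_left_mono) auto
  also have "\<dots> = ennreal (2 * a + 2 * b)"
    using assms(6,7) by (simp add: ennreal_plus ennreal_mult)
  finally show ?thesis .
qed

lemma convergent_if_summable_weighted_sq_diff: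
  fixes x :: "nat \<Rightarrow> real"
  assumes "summable (\<lambda>i. 2^i * (x (Suc i) - x i)^2)"
  shows "convergent x"
proof -
  have "summable (\<lambda>i. 2^i * (x (Suc i) - x i)^2 + (1/2::real)^i)"
    using assms by (intro summable_add) simp_all
  moreover have "norm (norm (x (Suc i) - x i)) \<le> 2^i * (x (Suc i) - x i)^2 + (1/2)^i" for i
    using abs_le_mult_sq_plus_inverse[of "2^i" "x (Suc i) - x i"] by (simp add: power_one_over)
  ultimately have "summable (\<lambda>i. norm (x (Suc i) - x i))"
    by (rule summable_comparison_test'[where N = 0])
  then have "convergent (\<lambda>n. \<Sum>i<n. x (Suc i) - x i)"
    unfolding summable_iff_convergent[symmetric] by (rule summable_norm_cancel)
  then have "convergent (\<lambda>n. x 0 + (\<Sum>i<n. x (Suc i) - x i))"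
    by (intro convergent_add convergent_const)
  then show ?thesis
    by (simp add: sum_lessThan_telescope)
qed

lemma AE_convergent_rapid_L2_cauchy:
  fixes H :: "nat \<Rightarrow> 'a \<Rightarrow> real"
  assumes [measurable]: "\<And>i. H i \<in> borel_measurable M"
    and step: "\<And>i. (\<integral>\<^sup>+t. ennreal ((H i t - H (Suc i) t)^2) \<partial>M) \<le> ennreal ((1/4)^i)"
  shows "AE t in M. convergent (\<lambda>i. H i t)"
proof -
  define d where "d i t = H (Suc i) t - H i t" for i t
  define \<Phi> where "\<Phi> t = (\<Sum>i. ennreal (2^i * (d i t)^2))" for t
  have "(\<integral>\<^sup>+t. \<Phi> t \<partial>M) = (\<Sum>i. \<integral>\<^sup>+t. ennreal (2^i * (d i t)^2) \<partial>M)"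
    unfolding \<Phi>_def d_def by (rule nn_integral_suminf) measurable
  also have "\<dots> \<le> (\<Sum>i. ennreal ((1/2)^i))"
  proof (intro suminf_le)
    fix i
    have "(\<integral>\<^sup>+t. ennreal (2^i * (d i t)^2) \<partial>M)
        = 2^i * (\<integral>\<^sup>+t. ennreal ((H i t - H (Suc i) t)^2) \<partial>M)"
      unfolding d_def
      by (simp add: ennreal_mult nn_integral_cmult power2_commute ennreal_power flip: ennreal_numeral)
    also have "\<dots> \<le> 2^i * ennreal ((1/4)^i)"
      by (intro mult_left_mono step) simp
    also have "\<dots> = ennreal ((1/2)^i)"
      by (simp add: ennreal_power ennreal_mult[symmetric] power_mult_distrib[symmetric]
          flip: ennreal_numeral)
    finally show "(\<integral>\<^sup>+t. ennreal (2^i * (d i t)^2) \<partial>M) \<le> ennreal ((1/2)^i)" .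
  qed auto
  also have "\<dots> = ennreal 2"
    by (rule suminf_ennreal_eq) (auto intro: geometric_sums[of "1/2::real", simplified])
  finally have "(\<integral>\<^sup>+t. \<Phi> t \<partial>M) \<noteq> \<infinity>"
    by (auto simp: top_unique)
  then have "AE t in M. \<Phi> t \<noteq> \<infinity>"
    by (intro nn_integral_noteq_infinite) (unfold \<Phi>_def d_def, measurable)
  then show ?thesis
  proof (rule AE_mp, intro AE_I2 impI)
    fix t
    assume "\<Phi> t \<noteq> \<infinity>"
    then have "summable (\<lambda>i. 2^i * (d i t)^2)"
      unfolding \<Phi>_def by (intro summable_suminf_not_top) (auto simp: top_unique)
    then show "convergent (\<lambda>i. H i t)"
      unfolding d_def by (rule convergent_if_summable_weighted_sq_diff)
  qed
qed

lemma L2_limit_rapid_cauchy: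
  fixes H :: "nat \<Rightarrow> 'a \<Rightarrow> real"
  assumes [measurable]: "\<And>i. H i \<in> borel_measurable M"
    and cauchy: "\<And>i j. i \<le> j \<Longrightarrow> (\<integral>\<^sup>+t. ennreal ((H i t - H j t)^2) \<partial>M) \<le> ennreal ((1/4)^i)"
  shows "\<exists>f\<in>borel_measurable M. \<forall>k. (\<integral>\<^sup>+t. ennreal ((H k t - f t)^2) \<partial>M) \<le> ennreal ((1/4)^k)"
proof -
  define f where "f t = lim (\<lambda>i. H i t)" for t
  have conv: "AE t in M. convergent (\<lambda>i. H i t)"
    using cauchy by (intro AE_convergent_rapid_L2_cauchy) auto
  have "(\<integral>\<^sup>+t. ennreal ((H k t - f t)^2) \<partial>M) \<le> ennreal ((1/4)^k)" for k
  proof -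
    have "AE t in M. ennreal ((H k t - f t)^2) = liminf (\<lambda>j. ennreal ((H k t - H j t)^2))"
    proof (rule AE_mp[OF conv], intro AE_I2 impI)
      fix t
      assume "convergent (\<lambda>i. H i t)"
      then have "(\<lambda>j. ennreal ((H k t - H j t)^2)) \<longlonglongrightarrow> ennreal ((H k t - f t)^2)"
        unfolding f_def by (intro tendsto_ennrealI tendsto_intros) (simp add: convergent_LIMSEQ_iff)
      then show "ennreal ((H k t - f t)^2) = liminf (\<lambda>j. ennreal ((H k t - H j t)^2))"
        by (rule lim_imp_Liminf[symmetric, OF trivial_limit_sequentially])
    qed
    then have "(\<integral>\<^sup>+t. ennreal ((H k t - f t)^2) \<partial>M)
        = (\<integral>\<^sup>+t. liminf (\<lambda>j. ennreal ((H k t - H j t)^2)) \<partial>M)"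
      by (rule nn_integral_cong_AE)
    also have "\<dots> \<le> liminf (\<lambda>j. \<integral>\<^sup>+t. ennreal ((H k t - H j t)^2) \<partial>M)"
      by (rule nn_integral_liminf) measurable
    also have "\<dots> \<le> ennreal ((1/4)^k)"
    proof (rule Liminf_le)
      show "\<forall>\<^sub>F j in sequentially. (\<integral>\<^sup>+t. ennreal ((H k t - H j t)^2) \<partial>M) \<le> ennreal ((1/4)^k)"
        using eventually_ge_at_top[of k] by eventually_elim (rule cauchy)
    qed simp
    finally show ?thesis .
  qed
  moreover have "f \<in> borel_measurable M"
    unfolding f_def by measurable
  ultimately show ?thesis
    by blast
qed

section \<open>Compactness\<close>

lemma bounded_family_clusters:
  fixes v :: "'b \<Rightarrow> 'a \<Rightarrow> real"
  assumes "finite V" "0 < \<delta>" "infinite K"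
    and bound: "\<And>k y. k \<in> K \<Longrightarrow> y \<in> V \<Longrightarrow> \<bar>v k y\<bar> \<le> B"
  shows "\<exists>K'\<subseteq>K. infinite K' \<and> (\<exists>q. \<forall>k\<in>K'. \<forall>y\<in>V. \<bar>v k y - q y\<bar> \<le> \<delta>)"
proof -
  define J where "J = \<lceil>B / \<delta>\<rceil> + 1"
  define grid where "grid k = restrict (\<lambda>y. \<delta> * of_int (round (v k y / \<delta>))) V" for k
  have round: "\<bar>v k y - \<delta> * of_int (round (v k y / \<delta>))\<bar> \<le> \<delta>" for k y
  proof -
    have "\<bar>v k y - \<delta> * of_int (round (v k y / \<delta>))\<bar>
        = \<delta> * \<bar>of_int (round (v k y / \<delta>)) - v k y / \<delta>\<bar>"
      using assms(2) by (simp add: abs_mult_pos' field_simps abs_minus_commute)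
    also have "\<dots> \<le> \<delta> * (1/2)"
      using assms(2) by (intro mult_left_mono of_int_round_abs_le) auto
    finally show ?thesis
      using assms(2) by linarith
  qed
  have "round (v k y / \<delta>) \<in> {-J..J}" if "k \<in> K" "y \<in> V" for k y
  proof -
    have "\<bar>v k y / \<delta>\<bar> \<le> B / \<delta>"
      using bound[OF that] assms(2) by (simp add: divide_right_mono abs_divide)
    then have "\<bar>of_int (round (v k y / \<delta>)) :: real\<bar> \<le> of_int J"
      unfolding J_def using of_int_round_abs_le[of "v k y / \<delta>"] le_of_int_ceiling[of "B / \<delta>"]
      by linarith
    then show ?thesis
      by (simp add: abs_le_iff flip: of_int_abs)
  qed
  then have "grid ` K \<subseteq> (\<Pi>\<^sub>E y\<in>V. (\<lambda>i. \<delta> * of_int i) ` {-J..J})"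
    unfolding grid_def by auto
  then have "finite (grid ` K)"
    using assms(1) by (rule finite_subset[OF _ finite_PiE]) simp
  then obtain q where "infinite (grid -` {q} \<inter> K)"
    using inf_img_fin_domE'[OF _ assms(3)] by metis
  moreover have "\<bar>v k y - q y\<bar> \<le> \<delta>" if "k \<in> grid -` {q} \<inter> K" "y \<in> V" for k y
    using that round[of k y] unfolding grid_def by auto
  ultimately show ?thesis
    by blast
qed

lemma nn_integral_step_fun_coarse_graining_le:
  assumes "m \<le> n" "0 < lam" "0 \<le> s"
    and lb: "\<And>x x'. x \<in> V1 n \<Longrightarrow> x' \<in> V1 n \<Longrightarrow> x \<noteq> x' \<Longrightarrow>
      lam * \<bar>x - x'\<bar> powr (-(1 + 2 * s)) \<le> j1 r n x x'"
  shows "(\<integral>\<^sup>+t. ennreal ((step_fun n u t - step_fun m (cell_avg n m u) t)^2) \<partial>lborel)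
    \<le> ennreal (2^(m+1) * (2/2^m) powr (1 + 2 * s) / lam * E1 r n u)"
  unfolding nn_integral_step_fun_diff_sq E1_def
  using coarse_graining_error_le[OF assms] by (intro ennreal_leI) (simp add: ac_simps)

lemma nn_integral_step_fun_close_le:
  assumes "\<And>y. y \<in> V1 m \<Longrightarrow> \<bar>v y - w y\<bar> \<le> \<delta>"
  shows "(\<integral>\<^sup>+t. ennreal ((step_fun m v t - step_fun m w t)^2) \<partial>lborel) \<le> ennreal (\<delta>^2)"
proof -
  have "(v y - w y)^2 \<le> \<delta>^2" if "y \<in> V1 m" for y
    using power_mono[OF assms[OF that] abs_ge_zero, of 2] by simp
  then have "(\<Sum>y\<in>V1 m. (v y - w y)^2 * mu1 m y) \<le> (\<Sum>y\<in>V1 m. \<delta>^2 * mu1 m y)"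
    by (intro sum_mono mult_right_mono mu1_nonneg)
  then show ?thesis
    by (simp add: step_fun_diff nn_integral_step_fun_sq sum_mu1 ennreal_leI
        flip: sum_distrib_left)
qed

lemma step_fun_cluster_at_level:
  fixes nb :: "nat \<Rightarrow> nat" and U :: "nat \<Rightarrow> real \<Rightarrow> real"
  assumes "0 < lam" "0 < s"
    and lb: "\<And>n x y. x \<in> V1 n \<Longrightarrow> y \<in> V1 n \<Longrightarrow> x \<noteq> y \<Longrightarrow>
      lam * \<bar>x - y\<bar> powr (-(1 + 2 * s)) \<le> j1 r n x y"
    and energy: "\<And>k. E1 r (nb k) (U k) \<le> M"
    and mass: "\<And>k. (\<Sum>x\<in>V1 (nb k). (U k x)^2 * mu1 (nb k) x) \<le> M"
    and m: "2^(m+1) * (2/2^m) powr (1 + 2 * s) / lam * M \<le> \<delta>^2" and "0 < \<delta>"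
    and K: "infinite K" "\<And>k. k \<in> K \<Longrightarrow> m \<le> nb k"
  shows "\<exists>K'\<subseteq>K. infinite K' \<and> (\<exists>q. \<forall>a\<in>K'.
    (\<integral>\<^sup>+t. ennreal ((step_fun (nb a) (U a) t - step_fun m q t)^2) \<partial>lborel) \<le> ennreal (4 * \<delta>^2))"
proof -
  have bounded: "\<bar>cell_avg (nb k) m (U k) y\<bar> \<le> sqrt (2^(m+1) * M)"
    if "k \<in> K" "y \<in> V1 m" for k y
  proof -
    have "2^(m+1) * (\<Sum>x\<in>V1 (nb k). (U k x)^2 * mu1 (nb k) x) \<le> 2^(m+1) * M"
      by (rule mult_left_mono[OF mass]) simp
    then have "(cell_avg (nb k) m (U k) y)^2 \<le> 2^(m+1) * M"
      using cell_avg_sq_le[OF that(2), of "nb k" "U k"] by linarith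
    then show ?thesis
      using real_le_rsqrt[of "\<bar>cell_avg (nb k) m (U k) y\<bar>"] by simp
  qed
  have "\<exists>K'\<subseteq>K. infinite K' \<and>
      (\<exists>q. \<forall>k\<in>K'. \<forall>y\<in>V1 m. \<bar>cell_avg (nb k) m (U k) y - q y\<bar> \<le> \<delta>)"
    using bounded by (rule bounded_family_clusters[OF finite_V1 \<open>0 < \<delta>\<close> K(1)])
  then obtain K' q where K': "K' \<subseteq> K" "infinite K'"
    and q: "\<And>k y. k \<in> K' \<Longrightarrow> y \<in> V1 m \<Longrightarrow> \<bar>cell_avg (nb k) m (U k) y - q y\<bar> \<le> \<delta>"
    by blast
  have "(\<integral>\<^sup>+t. ennreal ((step_fun (nb a) (U a) t - step_fun m q t)^2) \<partial>lborel)
      \<le> ennreal (2 * \<delta>^2 + 2 * \<delta>^2)" if "a \<in> K'" for a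
  proof (rule nn_integral_sq_diff_le[where h = "step_fun m (cell_avg (nb a) m (U a))"])
    have "2^(m+1) * (2/2^m) powr (1 + 2 * s) / lam * E1 r (nb a) (U a)
        \<le> 2^(m+1) * (2/2^m) powr (1 + 2 * s) / lam * M"
      using assms(1) by (intro mult_left_mono energy) simp
    then have "2^(m+1) * (2/2^m) powr (1 + 2 * s) / lam * E1 r (nb a) (U a) \<le> \<delta>^2"
      using m by linarith
    then show "(\<integral>\<^sup>+t. ennreal ((step_fun (nb a) (U a) t
        - step_fun m (cell_avg (nb a) m (U a)) t)^2) \<partial>lborel) \<le> ennreal (\<delta>^2)"
      using K(2) K'(1) that assms(1,2) lb
      by (intro order_trans[OF nn_integral_step_fun_coarse_graining_le] ennreal_leI) auto
    show "(\<integral>\<^sup>+t. ennreal ((step_fun m q t - step_fun m (cell_avg (nb a) m (U a)) t)^2) \<partial>lborel)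
        \<le> ennreal (\<delta>^2)"
      using q[OF that] by (intro nn_integral_step_fun_close_le) (simp add: abs_minus_commute)
  qed simp_all
  then show ?thesis
    using K' by (intro exI[of _ K']) auto
qed

lemma step_fun_cauchy_thinning:
  fixes nb :: "nat \<Rightarrow> nat" and U :: "nat \<Rightarrow> real \<Rightarrow> real"
  assumes nb: "strict_mono nb" and "0 < lam" "0 < s"
    and lb: "\<And>n x y. x \<in> V1 n \<Longrightarrow> y \<in> V1 n \<Longrightarrow> x \<noteq> y \<Longrightarrow>
      lam * \<bar>x - y\<bar> powr (-(1 + 2 * s)) \<le> j1 r n x y"
    and energy: "\<And>k. E1 r (nb k) (U k) \<le> M"
    and mass: "\<And>k. (\<Sum>x\<in>V1 (nb k). (U k x)^2 * mu1 (nb k) x) \<le> M"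
    and "0 < \<epsilon>" "infinite K"
  shows "\<exists>K'\<subseteq>K. infinite K' \<and> (\<forall>a\<in>K'. \<forall>b\<in>K'.
    (\<integral>\<^sup>+t. ennreal ((step_fun (nb a) (U a) t - step_fun (nb b) (U b) t)^2) \<partial>lborel) < ennreal \<epsilon>)"
proof -
  define \<delta> where "\<delta> = sqrt (\<epsilon>/32)"
  have \<delta>: "0 < \<delta>" "\<delta>^2 = \<epsilon>/32"
    unfolding \<delta>_def using assms(7) by simp_all
  have "(\<lambda>m. 2^(m+1) * (2/2^m) powr (1 + 2 * s) / lam * M) \<longlonglongrightarrow> 0 * M"
    using assms(3) by (intro tendsto_mult_right coarse_graining_constant_tendsto_zero)
  then have "eventually (\<lambda>m. 2^(m+1) * (2/2^m) powr (1 + 2 * s) / lam * M < \<delta>^2) sequentially"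
    using \<delta>(1) by (intro order_tendstoD(2)) auto
  then obtain m where m: "2^(m+1) * (2/2^m) powr (1 + 2 * s) / lam * M \<le> \<delta>^2"
    by (auto simp: eventually_sequentially intro: less_imp_le)
  have "K - {..<m} \<subseteq> {k\<in>K. m \<le> nb k}"
    using seq_suble[OF nb] by (auto simp: not_less intro: le_trans)
  moreover have "infinite (K - {..<m})"
    by (rule Diff_infinite_finite[OF _ assms(8)]) simp
  ultimately have fine: "infinite {k\<in>K. m \<le> nb k}"
    by (rule infinite_super)
  have "\<exists>K'\<subseteq>{k\<in>K. m \<le> nb k}. infinite K' \<and> (\<exists>q. \<forall>a\<in>K'.
      (\<integral>\<^sup>+t. ennreal ((step_fun (nb a) (U a) t - step_fun m q t)^2) \<partial>lborel) \<le> ennreal (4 * \<delta>^2))"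
    using step_fun_cluster_at_level[OF assms(2,3) lb energy mass m \<delta>(1) fine] by simp
  then obtain K' q where K': "K' \<subseteq> {k\<in>K. m \<le> nb k}" "infinite K'"
    and close: "\<And>a. a \<in> K' \<Longrightarrow>
      (\<integral>\<^sup>+t. ennreal ((step_fun (nb a) (U a) t - step_fun m q t)^2) \<partial>lborel) \<le> ennreal (4 * \<delta>^2)"
    by blast
  have "(\<integral>\<^sup>+t. ennreal ((step_fun (nb a) (U a) t - step_fun (nb b) (U b) t)^2) \<partial>lborel)
      < ennreal \<epsilon>" if "a \<in> K'" "b \<in> K'" for a b
  proof -
    have "(\<integral>\<^sup>+t. ennreal ((step_fun (nb a) (U a) t - step_fun (nb b) (U b) t)^2) \<partial>lborel)
        \<le> ennreal (2 * (4 * \<delta>^2) + 2 * (4 * \<delta>^2))"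
      using close[OF that(1)] close[OF that(2)] by (intro nn_integral_sq_diff_le) simp_all
    also have "\<dots> < ennreal \<epsilon>"
      using assms(7) \<delta>(2) by (intro ennreal_lessI) auto
    finally show ?thesis .
  qed
  then show ?thesis
    using K' by blast
qed

lemma step_fun_L2_convergent_subseq:
  fixes nb :: "nat \<Rightarrow> nat" and U :: "nat \<Rightarrow> real \<Rightarrow> real"
  assumes nb: "strict_mono nb" and "0 < lam" "0 < s"
    and lb: "\<And>n x y. x \<in> V1 n \<Longrightarrow> y \<in> V1 n \<Longrightarrow> x \<noteq> y \<Longrightarrow>
      lam * \<bar>x - y\<bar> powr (-(1 + 2 * s)) \<le> j1 r n x y"
    and energy: "\<And>k. E1 r (nb k) (U k) \<le> M"
    and mass: "\<And>k. (\<Sum>x\<in>V1 (nb k). (U k x)^2 * mu1 (nb k) x) \<le> M"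
  shows "\<exists>\<rho>. strict_mono \<rho> \<and> (\<exists>f\<in>borel_measurable lborel.
    (\<integral>\<^sup>+t. ennreal ((f t)^2) \<partial>lborel) < \<infinity> \<and>
    (\<lambda>k. \<integral>\<^sup>+t. ennreal ((step_fun (nb (\<rho> k)) (U (\<rho> k)) t - f t)^2) \<partial>lborel) \<longlonglongrightarrow> 0)"
proof -
  define H where "H k = step_fun (nb k) (U k)" for k
  define D where "D a b = (\<integral>\<^sup>+t. ennreal ((H a t - H b t)^2) \<partial>lborel)" for a b
  have "\<exists>\<rho>. strict_mono \<rho> \<and> (\<forall>i j. i \<le> j \<longrightarrow> D (\<rho> i) (\<rho> j) < ennreal ((1/4)^i))"
  proof (rule diagonal_subseq)
    fix i and K :: "nat set"
    assume "infinite K"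
    then show "\<exists>K'\<subseteq>K. infinite K' \<and> (\<forall>a\<in>K'. \<forall>b\<in>K'. D a b < ennreal ((1/4)^i))"
      unfolding D_def H_def by (intro step_fun_cauchy_thinning[OF assms]) simp_all
  qed
  then obtain \<rho> where \<rho>: "strict_mono \<rho>"
    and cauchy: "\<And>i j. i \<le> j \<Longrightarrow> D (\<rho> i) (\<rho> j) < ennreal ((1/4)^i)"
    by blast
  have "\<exists>f\<in>borel_measurable lborel.
      \<forall>k. (\<integral>\<^sup>+t. ennreal ((H (\<rho> k) t - f t)^2) \<partial>lborel) \<le> ennreal ((1/4)^k)"
    using cauchy unfolding D_def by (intro L2_limit_rapid_cauchy) (simp_all add: H_def less_imp_le)
  then obtain f where f: "f \<in> borel_measurable lborel"
    and close: "\<And>k. (\<integral>\<^sup>+t. ennreal ((H (\<rho> k) t - f t)^2) \<partial>lborel) \<le> ennreal ((1/4)^k)"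
    by blast
  have "(\<integral>\<^sup>+t. ennreal ((f t - 0)^2) \<partial>lborel) \<le> ennreal (2 * 1 + 2 * M)"
  proof (rule nn_integral_sq_diff_le[where h = "H (\<rho> 0)"])
    show "(\<integral>\<^sup>+t. ennreal ((f t - H (\<rho> 0) t)^2) \<partial>lborel) \<le> ennreal 1"
      using close[of 0] by (simp add: power2_commute)
    show "(\<integral>\<^sup>+t. ennreal ((0 - H (\<rho> 0) t)^2) \<partial>lborel) \<le> ennreal M"
      using mass unfolding H_def by (simp add: nn_integral_step_fun_sq ennreal_leI)
    show "0 \<le> M"
      using mass[of 0] sum_sq_mu1_nonneg[where n = "nb 0" and w = "U 0"] by linarith
  qed (use f in \<open>simp_all add: H_def\<close>)
  then have "(\<integral>\<^sup>+t. ennreal ((f t)^2) \<partial>lborel) < \<infinity>"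
    by (simp add: le_less_trans)
  moreover have "(\<lambda>k. \<integral>\<^sup>+t. ennreal ((H (\<rho> k) t - f t)^2) \<partial>lborel) \<longlonglongrightarrow> 0"
  proof (rule tendsto_sandwich[of "\<lambda>_. 0" _ _ "\<lambda>k. ennreal ((1/4)^k)"])
    show "(\<lambda>k. ennreal ((1/4)^k)) \<longlonglongrightarrow> 0"
      by (rule tendsto_ennrealI[where x = 0, simplified]) (intro LIMSEQ_power_zero, simp)
  qed (simp_all add: close)
  ultimately show ?thesis
    using \<rho> f unfolding H_def by blast
qed

lemma bounded_subseq_of_liminf_less_infinity:
  fixes a :: "nat \<Rightarrow> real"
  assumes "liminf (\<lambda>n. ereal (a n)) < \<infinity>"
  shows "\<exists>M (nb :: nat \<Rightarrow> nat). strict_mono nb \<and> (\<forall>k. a (nb k) \<le> M)"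
proof -
  obtain N :: nat where N: "liminf (\<lambda>n. ereal (a n)) < ereal (real N)"
    using assms less_PInf_Ex_of_nat by auto
  have "\<exists>n>k. a n < real N" for k
  proof -
    obtain n where "k < n" "ereal (a n) < ereal (real N)"
      using liminf_upper_bound[OF N] by blast
    then show ?thesis
      by auto
  qed
  then have "infinite {n. a n < real N}"
    unfolding infinite_nat_iff_unbounded by simp
  then obtain nb :: "nat \<Rightarrow> nat" where "strict_mono nb" "\<And>k. nb k \<in> {n. a n < real N}"
    using infinite_enumerate by blast
  then have "strict_mono nb \<and> (\<forall>k. a (nb k) \<le> real N)"
    by (simp add: less_imp_le)
  then show ?thesis
    by blast
qed

lemma E1_nonneg:
  assumes "0 < lam"
    and "\<And>x y. x \<in> V1 n \<Longrightarrow> y \<in> V1 n \<Longrightarrow> x \<noteq> y \<Longrightarrow>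
      lam * \<bar>x - y\<bar> powr (-(1 + 2 * s)) \<le> j1 r n x y"
  shows "0 \<le> E1 r n w"
proof -
  have j_nonneg: "0 \<le> j1 r n x y" if "x \<in> V1 n" "y \<in> V1 n" for x y
  proof (cases "x = y")
    case False
    have "0 \<le> lam * \<bar>x - y\<bar> powr (-(1 + 2 * s))"
      using assms(1) by simp
    then show ?thesis
      using assms(2)[OF that False] by linarith
  qed (simp add: j1_def)
  show ?thesis
    unfolding E1_def by (intro sum_nonneg mult_nonneg_nonneg mu1_nonneg j_nonneg zero_le_power2)
qed

lemma nn_integral_unit_Ext1_le:
  "(\<integral>\<^sup>+x\<in>{0..1}. ennreal ((Ext1 n w x - f x)^2) \<partial>lborel)
    \<le> (\<integral>\<^sup>+x. ennreal ((step_fun n w x - f x)^2) \<partial>lborel)"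
  by (intro nn_integral_mono) (simp add: step_fun_eq_Ext1 indicator_def)

theorem proposition5p12:
  fixes r :: "nat \<Rightarrow> lbl \<Rightarrow> real" and s lam1 Lam1 :: real
    and u :: "nat \<Rightarrow> real \<Rightarrow> real"
  assumes r: "weights_ok r"
    and s: "0 < s" "s < 1/2"
    and lam: "0 < lam1" "lam1 \<le> Lam1"
    and bounds: "\<And>n x y. x \<in> V1 n \<Longrightarrow> y \<in> V1 n \<Longrightarrow> x \<noteq> y \<Longrightarrow>
        lam1 * \<bar>x - y\<bar> powr (-(1 + 2 * s)) \<le> j1 r n x y \<and>
        j1 r n x y \<le> Lam1 * \<bar>x - y\<bar> powr (-(1 + 2 * s))"
    and fin: "liminf (\<lambda>n. ereal (E1 r n (u n) + (\<Sum>x\<in>V1 n. \<bar>u n x\<bar>^2 * mu1 n x)))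
               < \<infinity>"
  shows "\<exists>nk :: nat \<Rightarrow> nat. strict_mono nk \<and>
           (\<exists>f :: real \<Rightarrow> real. f \<in> borel_measurable (lebesgue_on {0..1}) \<and>
              (\<integral>\<^sup>+ x\<in>{0..1}. ennreal ((f x)^2) \<partial>lborel) < \<infinity> \<and>
              ((\<lambda>k. \<integral>\<^sup>+ x\<in>{0..1}. ennreal ((Ext1 (nk k) (u (nk k)) x - f x)^2) \<partial>lborel)
                 \<longlonglongrightarrow> 0))"
proof -
  have lb: "\<And>n x y. x \<in> V1 n \<Longrightarrow> y \<in> V1 n \<Longrightarrow> x \<noteq> y \<Longrightarrow>
      lam1 * \<bar>x - y\<bar> powr (-(1 + 2 * s)) \<le> j1 r n x y"
    using bounds by blast
  obtain M and nb :: "nat \<Rightarrow> nat" where nb: "strict_mono nb"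
    and bound: "\<And>k. E1 r (nb k) (u (nb k)) + (\<Sum>x\<in>V1 (nb k). \<bar>u (nb k) x\<bar>^2 * mu1 (nb k) x) \<le> M"
    using bounded_subseq_of_liminf_less_infinity[OF fin] by blast
  have energy: "E1 r (nb k) (u (nb k)) \<le> M"
    and mass: "(\<Sum>x\<in>V1 (nb k). (u (nb k) x)^2 * mu1 (nb k) x) \<le> M" for k
    using bound[of k] sum_sq_mu1_nonneg[where n = "nb k" and w = "u (nb k)"]
      E1_nonneg[where n = "nb k" and w = "u (nb k)", OF lam(1) lb]
    by simp_all
  obtain \<rho> f where \<rho>: "strict_mono \<rho>" and f: "f \<in> borel_measurable lborel"
    and f_sq: "(\<integral>\<^sup>+t. ennreal ((f t)^2) \<partial>lborel) < \<infinity>"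
    and conv: "(\<lambda>k. \<integral>\<^sup>+t. ennreal ((step_fun (nb (\<rho> k)) (u (nb (\<rho> k))) t - f t)^2) \<partial>lborel)
      \<longlonglongrightarrow> 0"
    using step_fun_L2_convergent_subseq[OF nb lam(1) s(1) lb energy mass] by blast
  have "(\<lambda>k. \<integral>\<^sup>+x\<in>{0..1}. ennreal ((Ext1 (nb (\<rho> k)) (u (nb (\<rho> k))) x - f x)^2) \<partial>lborel) \<longlonglongrightarrow> 0"
    by (rule tendsto_sandwich[OF _ _ tendsto_const conv]) (simp_all add: nn_integral_unit_Ext1_le)
  moreover have "f \<in> borel_measurable (lebesgue_on {0..1})"
    using f by (intro measurable_restrict_space1 measurable_completion) simp
  moreover have "(\<integral>\<^sup>+x\<in>{0..1}. ennreal ((f x)^2) \<partial>lborel) < \<infinity>"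
    using f_sq by (rule le_less_trans[rotated]) (intro nn_integral_mono, simp add: indicator_def)
  ultimately show ?thesis
    using strict_mono_o[OF nb \<rho>] unfolding o_def by blast
qed

end
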